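(* Let $A$ be a finite set of options and consider $V\ge1$ votes, each a truncated ranking with possible ties, interpreted as in the context, with associated Llull matrix $v$ and path scores $v^*$. Let $x,y\in A$ be distinct and assume $x$ dominates $y$ in the sense of Pareto. Then for every $a\in A\setminus\{x,y\}$: $v_{xa}\ge v_{ya}$, $v_{ay}\ge v_{ax}$, $v^*_{xa}\ge v^*_{ya}$, $v^*_{ay}\ge v^*_{ax}$; and moreover $v^*_{xy}\ge v^*_{yx}$.
   Context: A truncated ranking with ties is a weak order on a subset $R$ of $A$ (the ranked options). It is interpreted as follows: for ranked options, $x$ is preferred to $y$ if $x$ is strictly above $y$, and $x,y$ are ranked equally if they are tied; every ranked option is preferred to every unranked option; no comparison is made between two unranked options. The Llull matrix is $v_{xy}=(\#\{\text{votes preferring }x\text{ to }y\}+\tfrac12\#\{\text{votes ranking }x,y\text{ equally}\})/V$. Path scores: $v^*_{xy}=\max\min(v_{x_0x_1},\dots,v_{x_{m-1}x_m})$ over all paths $x_0\dots x_m$ ($m\ge1$, $x_0=x$, $x_m=y$, $x_i$ pairwise distinct). $x$ dominates $y$ in the sense of Pareto if every vote (as interpreted) either prefers $x$ to $y$ or ranks $x$ and $y$ equally, and at least one vote prefers $x$ to $y$. *)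

theory Defs
  imports Complex_Main "HOL-Library.Multiset"
begin

text \<open>A truncated ranking with ties on a set A of options is encoded as a rank function
  r :: 'a => nat option: r x = None means x is unranked; r x = Some k means x is ranked at
  level k (smaller level = higher position).
  Every weak order on a finite subset R of A arises in this way.\<close>

definition ballot :: "'a set \<Rightarrow> ('a \<Rightarrow> nat option) \<Rightarrow> bool" where
  "ballot A r \<longleftrightarrow> {x. r x \<noteq> None} \<subseteq> A"

definition prefers :: "('a \<Rightarrow> nat option) \<Rightarrow> 'a \<Rightarrow> 'a \<Rightarrow> bool" where
  "prefers r x y \<longleftrightarrow>
     (\<exists>i j. r x = Some i \<and> r y = Some j \<and> i < j) \<or> (r x \<noteq> None \<and> r y = None)"

definition ranks_equal :: "('a \<Rightarrow> nat option) \<Rightarrow> 'a \<Rightarrow> 'a \<Rightarrow> bool" where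
  "ranks_equal r x y \<longleftrightarrow> (\<exists>i. r x = Some i \<and> r y = Some i)"

definition llull :: "('a \<Rightarrow> nat option) multiset \<Rightarrow> 'a \<Rightarrow> 'a \<Rightarrow> real" where
  "llull P x y =
     (real (size (filter_mset (\<lambda>r. prefers r x y) P))
      + real (size (filter_mset (\<lambda>r. ranks_equal r x y) P)) / 2) / real (size P)"

definition is_path :: "'a set \<Rightarrow> 'a \<Rightarrow> 'a \<Rightarrow> 'a list \<Rightarrow> bool" where
  "is_path A x y p \<longleftrightarrow> length p \<ge> 2 \<and> hd p = x \<and> last p = y \<and> distinct p \<and> set p \<subseteq> A"

definition path_strength :: "('a \<Rightarrow> nat option) multiset \<Rightarrow> 'a list \<Rightarrow> real" where
  "path_strength P p = Min ((\<lambda>i. llull P (p ! i) (p ! Suc i)) ` {..<length p - 1})"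

definition path_score :: "'a set \<Rightarrow> ('a \<Rightarrow> nat option) multiset \<Rightarrow> 'a \<Rightarrow> 'a \<Rightarrow> real" where
  "path_score A P x y = Max (path_strength P ` {p. is_path A x y p})"

definition pareto_dominates :: "('a \<Rightarrow> nat option) multiset \<Rightarrow> 'a \<Rightarrow> 'a \<Rightarrow> bool" where
  "pareto_dominates P x y \<longleftrightarrow>
     (\<forall>r\<in>#P. prefers r x y \<or> ranks_equal r x y) \<and> (\<exists>r\<in>#P. prefers r x y)"

end

theory Submission
  imports Defs "HOL-Combinatorics.Transposition"
begin

text \<open>Weak Pareto dominance of \<open>x\<close> over \<open>y\<close> means that exchanging \<open>x\<close> and \<open>y\<close> in a pair
  \<open>(a, b)\<close> with \<open>a \<noteq> x\<close> and \<open>b \<noteq> y\<close> can only raise its support in every vote, hence its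
  Llull score. Applied edgewise, the exchange turns a path from \<open>y\<close> to \<open>a\<close> (from \<open>a\<close> to \<open>x\<close>,
  from \<open>y\<close> to \<open>x\<close>) that meets \<open>y\<close> only at its start and \<open>x\<close> only at its end into an at
  least as strong path from \<open>x\<close> to \<open>a\<close> (from \<open>a\<close> to \<open>y\<close>, from \<open>x\<close> to \<open>y\<close>). A path that
  meets \<open>x\<close> (resp. \<open>y\<close>) elsewhere has a subpath starting at \<open>x\<close> (ending at \<open>y\<close>) that is
  at least as strong.\<close>

definition vote_score :: "('a \<Rightarrow> nat option) \<Rightarrow> 'a \<Rightarrow> 'a \<Rightarrow> real" where
  "vote_score r a b = (if prefers r a b then 1 else 0) + (if ranks_equal r a b then 1/2 else 0)"

lemma llull_eq_mean_vote_score: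
  "llull P a b = (\<Sum>r\<in>#P. vote_score r a b) / real (size P)"
proof -
  have "real (size (filter_mset (\<lambda>r. prefers r a b) P))
      + real (size (filter_mset (\<lambda>r. ranks_equal r a b) P)) / 2 = (\<Sum>r\<in>#P. vote_score r a b)"
    by (induction P) (auto simp: vote_score_def field_simps)
  then show ?thesis
    unfolding llull_def by simp
qed

lemma llull_mono:
  assumes "\<And>r. r \<in># P \<Longrightarrow> vote_score r a b \<le> vote_score r c d"
  shows "llull P a b \<le> llull P c d"
  unfolding llull_eq_mean_vote_score
  by (intro divide_right_mono sum_mset_mono) (auto simp: assms)

lemma vote_score_transpose_ge:
  assumes "prefers r x y \<or> ranks_equal r x y" and "a \<noteq> x" and "b \<noteq> y"
  shows "vote_score r a b \<le> vote_score r (transpose x y a) (transpose x y b)"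
  using assms unfolding vote_score_def prefers_def ranks_equal_def transpose_def
  by (cases "r x"; cases "r y"; cases "r a"; cases "r b"; auto)

lemma llull_transpose_ge:
  assumes "\<forall>r\<in>#P. prefers r x y \<or> ranks_equal r x y" and "a \<noteq> x" and "b \<noteq> y"
  shows "llull P a b \<le> llull P (transpose x y a) (transpose x y b)"
  using assms by (intro llull_mono vote_score_transpose_ge) auto

lemma path_strength_le_if_edges_dominate:
  assumes "length p \<ge> 2" and "length q \<ge> 2"
    and "\<And>i. i < length q - 1 \<Longrightarrow>
           \<exists>j<length p - 1. llull P (p ! j) (p ! Suc j) \<le> llull P (q ! i) (q ! Suc i)"
  shows "path_strength P p \<le> path_strength P q"
  unfolding path_strength_def
proof (rule Min.boundedI)
  show "finite ((\<lambda>i. llull P (q ! i) (q ! Suc i)) ` {..<length q - 1})"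
    by simp
  show "(\<lambda>i. llull P (q ! i) (q ! Suc i)) ` {..<length q - 1} \<noteq> {}"
    using assms(2) by (auto simp: lessThan_empty_iff)
next
  fix e assume "e \<in> (\<lambda>i. llull P (q ! i) (q ! Suc i)) ` {..<length q - 1}"
  then obtain i where i: "i < length q - 1" and e: "e = llull P (q ! i) (q ! Suc i)"
    by auto
  obtain j where j: "j < length p - 1" and le: "llull P (p ! j) (p ! Suc j) \<le> e"
    using assms(3)[OF i] e by blast
  have "Min ((\<lambda>i. llull P (p ! i) (p ! Suc i)) ` {..<length p - 1}) \<le> llull P (p ! j) (p ! Suc j)"
    using j by (intro Min_le) auto
  then show "Min ((\<lambda>i. llull P (p ! i) (p ! Suc i)) ` {..<length p - 1}) \<le> e"
    using le by linarith
qed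

lemma path_strength_infix_ge:
  assumes "p = s @ q @ t" and "length q \<ge> 2"
  shows "path_strength P p \<le> path_strength P q"
proof (rule path_strength_le_if_edges_dominate)
  fix i assume i: "i < length q - 1"
  have "p ! (length s + i) = q ! i" and "p ! Suc (length s + i) = q ! Suc i"
    using assms i by (auto simp: nth_append)
  moreover have "length s + i < length p - 1"
    using assms i by simp
  ultimately show "\<exists>j<length p - 1. llull P (p ! j) (p ! Suc j) \<le> llull P (q ! i) (q ! Suc i)"
    by (metis order.refl)
qed (use assms in auto)

lemma is_path_suffix:
  assumes "is_path A u v p" and "z \<in> set p" and "z \<noteq> v"
  obtains q where "is_path A z v q" and "path_strength P p \<le> path_strength P q"
proof -
  obtain s w where p: "p = s @ z # w"
    using split_list assms(2) by metis
  with assms have "w \<noteq> []"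
    unfolding is_path_def by auto
  then have "is_path A z v (z # w)" and "length (z # w) \<ge> 2"
    using assms(1) p unfolding is_path_def by (cases w; auto)+
  moreover have "path_strength P p \<le> path_strength P (z # w)"
    using p calculation(2) by (intro path_strength_infix_ge[of _ s _ "[]"]) auto
  ultimately show thesis
    using that by blast
qed

lemma is_path_prefix:
  assumes "is_path A u v p" and "z \<in> set p" and "z \<noteq> u"
  obtains q where "is_path A u z q" and "path_strength P p \<le> path_strength P q"
proof -
  obtain s w where p: "p = s @ z # w"
    using split_list assms(2) by metis
  with assms have "s \<noteq> []"
    unfolding is_path_def by auto
  then have "is_path A u z (s @ [z])" and "length (s @ [z]) \<ge> 2"
    using assms(1) p unfolding is_path_def by (cases s; auto)+
  moreover have "path_strength P p \<le> path_strength P (s @ [z])"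
    using p calculation(2) by (intro path_strength_infix_ge[of _ "[]" _ w]) auto
  ultimately show thesis
    using that by blast
qed

lemma is_path_map_transpose:
  assumes "is_path A u v p" and "x \<in> A" and "y \<in> A"
  shows "is_path A (transpose x y u) (transpose x y v) (map (transpose x y) p)"
proof -
  have "set (map (transpose x y) p) \<subseteq> A"
    using assms unfolding is_path_def transpose_def by auto
  moreover have "p \<noteq> []"
    using assms(1) unfolding is_path_def by auto
  ultimately show ?thesis
    using assms(1) unfolding is_path_def by (auto simp: hd_map last_map distinct_map)
qed

lemma path_strength_map_transpose_ge:
  assumes dominates: "\<forall>r\<in>#P. prefers r x y \<or> ranks_equal r x y"
    and p: "is_path A u v p"
    and y_first: "y \<in> set p \<Longrightarrow> hd p = y" and x_last: "x \<in> set p \<Longrightarrow> last p = x"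
  shows "path_strength P p \<le> path_strength P (map (transpose x y) p)"
proof (rule path_strength_le_if_edges_dominate)
  have len: "length p \<ge> 2" and dist: "distinct p"
    using p unfolding is_path_def by auto
  then have "p \<noteq> []"
    by auto
  from len show "length p \<ge> 2" and "length (map (transpose x y) p) \<ge> 2"
    by auto
  fix i assume i: "i < length (map (transpose x y) p) - 1"
  have "p ! i \<noteq> x"
  proof
    assume "p ! i = x"
    then have "p ! i = p ! (length p - 1)"
      using i x_last \<open>p \<noteq> []\<close> nth_mem[of i p] by (auto simp: last_conv_nth)
    with dist i show False
      by (simp add: nth_eq_iff_index_eq)
  qed
  moreover have "p ! Suc i \<noteq> y"
  proof
    assume "p ! Suc i = y"
    then have "p ! Suc i = p ! 0"
      using i y_first \<open>p \<noteq> []\<close> nth_mem[of "Suc i" p] by (auto simp: hd_conv_nth)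
    with dist i show False
      using nth_eq_iff_index_eq[of p "Suc i" 0] \<open>p \<noteq> []\<close> by simp
  qed
  ultimately have "llull P (p ! i) (p ! Suc i)
      \<le> llull P (map (transpose x y) p ! i) (map (transpose x y) p ! Suc i)"
    using i dominates by (simp add: llull_transpose_ge)
  with i show "\<exists>j<length p - 1. llull P (p ! j) (p ! Suc j)
      \<le> llull P (map (transpose x y) p ! i) (map (transpose x y) p ! Suc i)"
    by auto
qed

lemma finite_paths:
  assumes "finite A"
  shows "finite {p. is_path A u v p}"
proof (rule finite_subset)
  show "{p. is_path A u v p} \<subseteq> {xs. set xs \<subseteq> A \<and> length xs \<le> card A}"
    unfolding is_path_def using assms by (auto simp: distinct_card[symmetric] intro: card_mono)
  show "finite {xs. set xs \<subseteq> A \<and> length xs \<le> card A}"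
    using assms by (rule finite_lists_length_le)
qed

lemma path_score_le_if_paths_dominated:
  assumes "finite A" and "is_path A u v p\<^sub>0"
    and dominated: "\<And>p. is_path A u v p \<Longrightarrow>
                     \<exists>q. is_path A u' v' q \<and> path_strength P p \<le> path_strength P q"
  shows "path_score A P u v \<le> path_score A P u' v'"
proof -
  let ?S = "path_strength P ` {p. is_path A u v p}"
  have "Max ?S \<in> ?S"
    using assms(2) finite_paths[OF assms(1)] by (intro Max_in) auto
  then obtain p where p: "is_path A u v p" and max: "Max ?S = path_strength P p"
    by auto
  obtain q where q: "is_path A u' v' q" and le: "path_strength P p \<le> path_strength P q"
    using dominated[OF p] by blast
  have "path_strength P q \<le> Max (path_strength P ` {p. is_path A u' v' p})"
    using q finite_paths[OF assms(1)] by (intro Max_ge) auto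
  with max le show ?thesis
    unfolding path_score_def by linarith
qed

lemma is_path_pair: "u \<in> A \<Longrightarrow> v \<in> A \<Longrightarrow> u \<noteq> v \<Longrightarrow> is_path A u v [u, v]"
  by (simp add: is_path_def)

context
  fixes A :: "'a set" and P :: "('a \<Rightarrow> nat option) multiset" and x y :: 'a
  assumes finite: "finite A"
    and dominates: "\<forall>r\<in>#P. prefers r x y \<or> ranks_equal r x y"
    and x: "x \<in> A" and y: "y \<in> A"
begin

lemma path_score_dominated_source:
  assumes "a \<in> A" and "a \<noteq> x" and "a \<noteq> y"
  shows "path_score A P y a \<le> path_score A P x a"
proof (rule path_score_le_if_paths_dominated[OF finite is_path_pair])
  fix p assume p: "is_path A y a p"
  show "\<exists>q. is_path A x a q \<and> path_strength P p \<le> path_strength P q"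
  proof (cases "x \<in> set p")
    case True
    then show ?thesis
      using is_path_suffix[OF p True] assms(2) by metis
  next
    case False
    have "hd p = y"
      using p unfolding is_path_def by simp
    then show ?thesis
      using False assms is_path_map_transpose[OF p x y]
        path_strength_map_transpose_ge[OF dominates p] by auto
  qed
qed (use assms y in auto)

lemma path_score_dominated_target:
  assumes "a \<in> A" and "a \<noteq> x" and "a \<noteq> y"
  shows "path_score A P a x \<le> path_score A P a y"
proof (rule path_score_le_if_paths_dominated[OF finite is_path_pair])
  fix p assume p: "is_path A a x p"
  show "\<exists>q. is_path A a y q \<and> path_strength P p \<le> path_strength P q"
  proof (cases "y \<in> set p")
    case True
    then show ?thesis
      using is_path_prefix[OF p True] assms(3) by metis
  next
    case False
    have "last p = x"
      using p unfolding is_path_def by simp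
    then show ?thesis
      using False assms is_path_map_transpose[OF p x y]
        path_strength_map_transpose_ge[OF dominates p] by auto
  qed
qed (use assms x in auto)

lemma path_score_dominated_pair:
  assumes "x \<noteq> y"
  shows "path_score A P y x \<le> path_score A P x y"
proof (rule path_score_le_if_paths_dominated[OF finite is_path_pair])
  fix p assume p: "is_path A y x p"
  then have "hd p = y" and "last p = x"
    unfolding is_path_def by simp_all
  then show "\<exists>q. is_path A x y q \<and> path_strength P p \<le> path_strength P q"
    using is_path_map_transpose[OF p x y] path_strength_map_transpose_ge[OF dominates p] by auto
qed (use assms x y in auto)

end

theorem proposition4p1:
  fixes A :: "'a set" and P :: "('a \<Rightarrow> nat option) multiset" and x y :: 'a
  assumes "finite A"
    and "size P \<ge> 1"
    and "\<forall>r\<in>#P. ballot A r"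
    and "x \<in> A" and "y \<in> A" and "x \<noteq> y"
    and "pareto_dominates P x y"
  shows "(\<forall>a\<in>A - {x, y}.
            llull P x a \<ge> llull P y a \<and> llull P a y \<ge> llull P a x \<and>
            path_score A P x a \<ge> path_score A P y a \<and>
            path_score A P a y \<ge> path_score A P a x)
         \<and> path_score A P x y \<ge> path_score A P y x"
proof -
  have dominates: "\<forall>r\<in>#P. prefers r x y \<or> ranks_equal r x y"
    using assms(7) unfolding pareto_dominates_def by blast
  have "llull P y a \<le> llull P x a" and "llull P a x \<le> llull P a y" if "a \<in> A - {x, y}" for a
    using that llull_transpose_ge[OF dominates, of y a] llull_transpose_ge[OF dominates, of a x]
    by auto
  moreover note path_score_dominated_source[OF assms(1) dominates assms(4,5)]
    path_score_dominated_target[OF assms(1) dominates assms(4,5)]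
    path_score_dominated_pair[OF assms(1) dominates assms(4,5,6)]
  ultimately show ?thesis
    by auto
qed

end
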